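(* For the FSPG iterates $(\mathbf{w}^{(k)})$, for every $k\ge0$, $$\Big\|\nabla\sum_{l=1}^L\tilde g_l(\mathbf{w}^{(k+1)},\mu^{(k+2)})-\nabla\sum_{l=1}^L\tilde g_l(\mathbf{w}^{(k)},\mu^{(k+1)})\Big\|_2\le\frac{\lambda_{\max}(\bar{\mathbf{X}}^\top\bar{\mathbf{X}})}{2\mu^{(k+1)}}\|\mathbf{w}^{(k+1)}-\mathbf{w}^{(k)}\|_2+\frac{n\sqrt{\lambda_{\max}(\bar{\mathbf{X}}^\top\bar{\mathbf{X}})}}{2}\cdot\frac{\mu^{(k+1)}-\mu^{(k+2)}}{\mu^{(k+2)}},$$ where $\nabla$ denotes the gradient with respect to $\mathbf{w}$.
   Context: Data: $L$ clients; client $l$ holds $y^{(l)}_1,\dots,y^{(l)}_{M_l}\in\mathbb{R}$ and $\bar{\mathbf{x}}^{(l)}_i=[(\mathbf{x}^{(l)}_i)^\top,1]^\top\in\mathbb{R}^{P+1}$; $n=\sum_l M_l$; $\bar{\mathbf{X}}\in\mathbb{R}^{(P+1)\times n}$ has all $\bar{\mathbf{x}}^{(l)}_i$ as columns; $\lambda_{\max}$ is the largest eigenvalue. Quantile level $\tau\in(0,1)$. Smoothing: $f(r,\mu)=|r|$ if $|r|\ge\mu$, $f(r,\mu)=\frac{r^2}{2\mu}+\frac{\mu}{2}$ if $|r|<\mu$; $\tilde g_l(\mathbf{w},\mu)=\frac12\sum_{i} f(y^{(l)}_i-(\bar{\mathbf{x}}^{(l)}_i)^\top\mathbf{w},\mu)+(\tau-\frac12)\sum_i(y^{(l)}_i-(\bar{\mathbf{x}}^{(l)}_i)^\top\mathbf{w})$.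 Penalty: $\lambda>0$, $P_{\lambda,\gamma}(\mathbf{w})=\sum_{p=1}^{P}g_{\lambda,\gamma}(w_p)$ with $g_{\lambda,\gamma}$ either MCP ($\gamma\ge1$): $\lambda|t|-\frac{t^2}{2\gamma}$ for $|t|\le\gamma\lambda$, $\frac{\gamma\lambda^2}{2}$ otherwise; or SCAD ($\gamma\ge2$): $\lambda|t|$ for $|t|\le\lambda$, $-\frac{t^2-2\gamma\lambda|t|+\lambda^2}{2(\gamma-1)}$ for $\lambda<|t|\le\gamma\lambda$, $\frac{(\gamma+1)\lambda^2}{2}$ for $|t|>\gamma\lambda$. FSPG algorithm: choose $\mathbf{w}^{(0)}\in\mathbb{R}^{P+1}$, $c>0$, $\beta>0$, $d\in(0,1)$; set $\sigma^{(k)}=ck^d$ and $\mu^{(k)}=\beta/k^d$ for $k\ge1$; for $k=0,1,2,\dots$ let $\mathbf{w}^{(k+1)}$ be a minimizer over $\mathbf{w}\in\mathbb{R}^{P+1}$ of $\sum_{l=1}^L\langle\nabla_{\mathbf{w}}\tilde g_l(\mathbf{w}^{(k)},\mu^{(k+1)}),\mathbf{w}-\mathbf{w}^{(k)}\rangle+nP_{\lambda,\gamma}(\mathbf{w})+\frac{\sigma^{(k+1)}}{2}\|\mathbf{w}-\mathbf{w}^{(k)}\|_2^2$. *)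

theory Defs
  imports "HOL-Analysis.Analysis"
begin

definition fsm :: "real \<Rightarrow> real \<Rightarrow> real" where
  "fsm r mu = (if \<bar>r\<bar> \<ge> mu then \<bar>r\<bar> else r\<^sup>2 / (2 * mu) + mu / 2)"

text \<open>Local smoothed quantile loss of client l. Client l holds samples i = 1..M l,
  responses y l i and augmented covariates xb l i (a vector of dimension P+1).\<close>
definition gtil :: "(nat \<Rightarrow> nat) \<Rightarrow> (nat \<Rightarrow> nat \<Rightarrow> real) \<Rightarrow> (nat \<Rightarrow> nat \<Rightarrow> real ^ 'd)
    \<Rightarrow> real \<Rightarrow> nat \<Rightarrow> real ^ 'd \<Rightarrow> real \<Rightarrow> real" where
  "gtil M y xb tau l w mu =
     (1/2) * (\<Sum>i\<in>{1..M l}. fsm (y l i - xb l i \<bullet> w) mu)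
     + (tau - 1/2) * (\<Sum>i\<in>{1..M l}. (y l i - xb l i \<bullet> w))"

definition grad :: "('a::real_inner \<Rightarrow> real) \<Rightarrow> 'a \<Rightarrow> 'a" where
  "grad f x = (THE D. GDERIV f x :> D)"

definition mcp :: "real \<Rightarrow> real \<Rightarrow> real \<Rightarrow> real" where
  "mcp lam gam t = (if \<bar>t\<bar> \<le> gam * lam then lam * \<bar>t\<bar> - t\<^sup>2 / (2 * gam) else gam * lam\<^sup>2 / 2)"

definition scad :: "real \<Rightarrow> real \<Rightarrow> real \<Rightarrow> real" where
  "scad lam gam t = (if \<bar>t\<bar> \<le> lam then lam * \<bar>t\<bar>
      else if \<bar>t\<bar> \<le> gam * lam then - (t\<^sup>2 - 2 * gam * lam * \<bar>t\<bar> + lam\<^sup>2) / (2 * (gam - 1))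
      else (gam + 1) * lam\<^sup>2 / 2)"

definition penalty :: "(real \<Rightarrow> real) \<Rightarrow> 'd \<Rightarrow> real ^ ('d::finite) \<Rightarrow> real" where
  "penalty g ic w = (\<Sum>p\<in>UNIV - {ic}. g (w $ p))"

definition is_eigenvalue :: "nat \<Rightarrow> (nat \<Rightarrow> nat \<Rightarrow> real) \<Rightarrow> real \<Rightarrow> bool" where
  "is_eigenvalue n A lam \<longleftrightarrow>
     (\<exists>v::nat \<Rightarrow> real. (\<exists>i<n. v i \<noteq> 0) \<and> (\<forall>i<n. (\<Sum>j<n. A i j * v j) = lam * v i))"

definition lambda_max :: "nat \<Rightarrow> (nat \<Rightarrow> nat \<Rightarrow> real) \<Rightarrow> real" where
  "lambda_max n A = Max {lam. is_eigenvalue n A lam}"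

text \<open>Columns of Xbar: all samples of clients 1..L in order; Gram matrix Xbar^T Xbar.\<close>
definition samples :: "nat \<Rightarrow> (nat \<Rightarrow> nat) \<Rightarrow> (nat \<Rightarrow> nat \<Rightarrow> 'a) \<Rightarrow> 'a list" where
  "samples L M xb = concat (map (\<lambda>l. map (\<lambda>i. xb l i) [1..<M l + 1]) [1..<L + 1])"

definition gram :: "nat \<Rightarrow> (nat \<Rightarrow> nat) \<Rightarrow> (nat \<Rightarrow> nat \<Rightarrow> real ^ 'd) \<Rightarrow> nat \<Rightarrow> nat \<Rightarrow> real" where
  "gram L M xb i j = samples L M xb ! i \<bullet> samples L M xb ! j"

end

theory Submission
  imports Defs
begin

(* The gradient of the summed smoothed loss at w is
     -1/2 * sum_p (psi_mu (y_p - x_p . w) + 2 tau - 1) x_p,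
   where psi_mu r, the clamp of r / mu to [-1, 1], is the derivative of the smoothed absolute
   value. So the difference of two gradients is -1/2 * sum_p delta_p x_p, whose norm is at most
   sqrt Lambda times the Euclidean norm of delta, because Lambda = lambda_max (X^T X) =
   lambda_max (X X^T) bounds the quadratic form sum_p (x_p . z)^2. Split delta_p into the change
   of the residual, controlled by the 1/mu-Lipschitz continuity of psi_mu and the same quadratic
   form, and the change of the smoothing parameter, where |psi_mu' - psi_mu| <= (mu - mu') / mu'
   for mu' <= mu; the factor n comes from the crude bound sqrt n <= n. *)

definition fsm_slope :: "real \<Rightarrow> real \<Rightarrow> real" where
  "fsm_slope r mu = max (-1) (min 1 (r / mu))"

lemma mult_fsm_slope_eq_clamp:
  assumes "mu > 0"
  shows "mu * fsm_slope r mu = max (-mu) (min mu r)"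
  using assms by (auto simp: fsm_slope_def max_def min_def field_simps)

lemma mult_fsm_eq_clamp:
  assumes "mu > 0"
  shows "mu * fsm r mu = r * max (-mu) (min mu r) - (max (-mu) (min mu r))\<^sup>2 / 2 + mu\<^sup>2 / 2"
proof -
  consider "r \<ge> mu" | "r \<le> -mu" | "\<bar>r\<bar> < mu" by linarith
  then show ?thesis
    using assms by cases (auto simp: fsm_def field_simps power2_eq_square)
qed

lemma clamp_variational_ineq:
  fixes x z mu :: real
  assumes "-mu \<le> z" "z \<le> mu"
  shows "(z - max (-mu) (min mu x)) * (x - max (-mu) (min mu x)) \<le> 0"
proof -
  consider "x \<ge> mu" "max (-mu) (min mu x) = mu" | "x \<le> -mu" "max (-mu) (min mu x) = -mu"
    | "x - max (-mu) (min mu x) = 0"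
    using assms by linarith
  then show ?thesis
  proof cases
    case 1
    then show ?thesis using assms by (intro mult_nonpos_nonneg) auto
  next
    case 2
    then show ?thesis using assms by (intro mult_nonneg_nonpos) auto
  qed simp
qed

lemma fsm_first_order_error:
  assumes mu: "mu > 0"
  shows "\<bar>fsm b mu - fsm a mu - fsm_slope a mu * (b - a)\<bar> \<le> (b - a)\<^sup>2 / mu"
proof -
  define ca where "ca = max (-mu) (min mu a)"
  define cb where "cb = max (-mu) (min mu b)"
  define e where "e = mu * fsm b mu - mu * fsm a mu - (mu * fsm_slope a mu) * (b - a)"
  have e_eq: "e = (cb - ca)\<^sup>2 / 2 - (ca - cb) * (b - cb)"
    unfolding e_def mult_fsm_eq_clamp[OF mu] mult_fsm_slope_eq_clamp[OF mu]
      ca_def[symmetric] cb_def[symmetric]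
    by (simp add: field_simps power2_eq_square)
  have "-mu \<le> ca" "ca \<le> mu" "-mu \<le> cb" "cb \<le> mu"
    using mu by (auto simp: ca_def cb_def)
  then have sign_b: "(ca - cb) * (b - cb) \<le> 0" and sign_a: "(cb - ca) * (a - ca) \<le> 0"
    unfolding ca_def cb_def by (simp_all only: clamp_variational_ineq)
  have "(b - a)\<^sup>2 - e = ((a - ca) - (b - cb))\<^sup>2 + (cb - ca)\<^sup>2 / 2
      - (ca - cb) * (b - cb) - 2 * ((cb - ca) * (a - ca))"
    unfolding e_eq by (simp add: field_simps power2_eq_square)
  then have "\<bar>e\<bar> \<le> (b - a)\<^sup>2"
    using sign_a sign_b e_eq zero_le_power2[of "(a - ca) - (b - cb)"] zero_le_power2[of "cb - ca"]
    by linarith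
  moreover have "fsm b mu - fsm a mu - fsm_slope a mu * (b - a) = e / mu"
    using mu unfolding e_def by (simp add: field_simps)
  ultimately show ?thesis
    using mu by (simp add: divide_right_mono)
qed

lemma fsm_has_real_derivative:
  assumes mu: "mu > 0"
  shows "((\<lambda>r. fsm r mu) has_real_derivative fsm_slope r mu) (at r)"
  unfolding DERIV_def
proof (rule LIM_zero_cancel, rule Lim_null_comparison)
  show "\<forall>\<^sub>F h in at 0. norm ((fsm (r + h) mu - fsm r mu) / h - fsm_slope r mu) \<le> \<bar>h\<bar> / mu"
    unfolding eventually_at_filter
  proof (intro always_eventually allI impI)
    fix h :: real
    assume "h \<noteq> 0"
    have "norm ((fsm (r + h) mu - fsm r mu) / h - fsm_slope r mu)
        = \<bar>fsm (r + h) mu - fsm r mu - fsm_slope r mu * h\<bar> / \<bar>h\<bar>"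
      using \<open>h \<noteq> 0\<close> by (simp add: field_simps flip: abs_divide)
    also have "\<dots> \<le> h\<^sup>2 / mu / \<bar>h\<bar>"
      using divide_right_mono[OF fsm_first_order_error[OF mu, of "r + h" r] abs_ge_zero[of h]]
      by simp
    also have "\<dots> = \<bar>h\<bar> / mu"
      using \<open>h \<noteq> 0\<close> mu by (simp add: power2_eq_square field_simps)
    finally show "norm ((fsm (r + h) mu - fsm r mu) / h - fsm_slope r mu) \<le> \<bar>h\<bar> / mu" .
  qed
  show "((\<lambda>h. \<bar>h\<bar> / mu) \<longlongrightarrow> 0) (at 0)"
    using tendsto_divide[OF tendsto_rabs_zero[OF tendsto_ident_at] tendsto_const, of mu] mu
    by simp
qed

lemma fsm_slope_lipschitz:
  assumes "mu > 0"
  shows "\<bar>fsm_slope a mu - fsm_slope b mu\<bar> \<le> \<bar>a - b\<bar> / mu"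
proof -
  have "\<bar>fsm_slope a mu - fsm_slope b mu\<bar> \<le> \<bar>a / mu - b / mu\<bar>"
    unfolding fsm_slope_def by (auto simp: max_def min_def abs_le_iff)
  also have "\<dots> = \<bar>a - b\<bar> / mu"
    using assms by (simp add: diff_divide_distrib[symmetric])
  finally show ?thesis .
qed

lemma fsm_slope_saturated:
  assumes "mu > 0" "mu \<le> \<bar>r\<bar>"
  shows "fsm_slope r mu = sgn r"
  using assms by (auto simp: fsm_slope_def sgn_if abs_if le_divide_eq divide_le_eq)

lemma fsm_slope_smoothing_change:
  assumes "0 < mu'" "mu' \<le> mu"
  shows "\<bar>fsm_slope r mu' - fsm_slope r mu\<bar> \<le> (mu - mu') / mu'"
proof (cases "\<bar>r\<bar> \<le> mu")
  case True
  have "\<bar>fsm_slope r mu' - fsm_slope r mu\<bar> \<le> \<bar>r / mu' - r / mu\<bar>"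
    unfolding fsm_slope_def by (auto simp: max_def min_def abs_le_iff)
  also have "\<dots> = \<bar>r\<bar> * ((mu - mu') / (mu * mu'))"
  proof -
    have "r / mu' - r / mu = r * ((mu - mu') / (mu * mu'))"
      using assms by (simp add: field_simps)
    then show ?thesis
      using assms by (simp add: abs_mult)
  qed
  also have "\<dots> \<le> mu * ((mu - mu') / (mu * mu'))"
    using assms True by (intro mult_right_mono) auto
  also have "\<dots> = (mu - mu') / mu'"
    using assms by simp
  finally show ?thesis .
next
  case False
  then show ?thesis
    using assms by (simp add: fsm_slope_saturated)
qed

lemma GDERIV_sum:
  assumes "\<And>i. i \<in> A \<Longrightarrow> GDERIV (f i) x :> D i"
  shows "GDERIV (\<lambda>x. \<Sum>i\<in>A. f i x) x :> (\<Sum>i\<in>A. D i)"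
  using assms unfolding gderiv_def inner_sum_right by (rule has_derivative_sum)

lemma grad_eqI:
  assumes "GDERIV f x :> D"
  shows "grad f x = D"
  unfolding grad_def
proof (rule the_equality)
  show "GDERIV f x :> D" by (rule assms)
next
  fix D'
  assume "GDERIV f x :> D'"
  then have "(\<lambda>h. h \<bullet> D') = (\<lambda>h. h \<bullet> D)"
    using assms unfolding gderiv_def by (rule has_derivative_unique)
  then have "(D' - D) \<bullet> (D' - D) = 0"
    by (metis inner_diff_right right_minus_eq)
  then show "D' = D" by simp
qed

lemma GDERIV_gtil:
  assumes mu: "mu > 0"
  shows "GDERIV (\<lambda>u. gtil M y xb tau l u mu) w
    :> (\<Sum>i\<in>{1..M l}. (- (1/2) * fsm_slope (y l i - xb l i \<bullet> w) mu - (tau - 1/2)) *\<^sub>R xb l i)"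
proof -
  have residual: "((\<lambda>u. fsm (y l i - xb l i \<bullet> u) mu) has_derivative
      (\<lambda>h. - (xb l i \<bullet> h) * fsm_slope (y l i - xb l i \<bullet> w) mu)) (at w)" for i
    by (rule DERIV_compose_FDERIV[OF fsm_has_real_derivative[OF mu]])
      (auto intro!: derivative_eq_intros)
  have "((\<lambda>u. gtil M y xb tau l u mu) has_derivative
     (\<lambda>h. (1/2) * (\<Sum>i\<in>{1..M l}. - (xb l i \<bullet> h) * fsm_slope (y l i - xb l i \<bullet> w) mu)
        + (tau - 1/2) * (\<Sum>i\<in>{1..M l}. 0 - xb l i \<bullet> h))) (at w)"
    unfolding gtil_def
    by (intro has_derivative_add has_derivative_mult_right has_derivative_sum residual
        has_derivative_diff has_derivative_const has_derivative_inner_right has_derivative_ident)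
  moreover have "(\<lambda>h. (1/2) * (\<Sum>i\<in>{1..M l}. - (xb l i \<bullet> h) * fsm_slope (y l i - xb l i \<bullet> w) mu)
        + (tau - 1/2) * (\<Sum>i\<in>{1..M l}. 0 - xb l i \<bullet> h))
    = (\<lambda>h. h \<bullet> (\<Sum>i\<in>{1..M l}.
          (- (1/2) * fsm_slope (y l i - xb l i \<bullet> w) mu - (tau - 1/2)) *\<^sub>R xb l i))"
    by (rule ext) (simp add: inner_sum_right sum_distrib_left sum_subtractf[symmetric]
        sum.distrib[symmetric] algebra_simps inner_commute)
  ultimately show ?thesis
    unfolding gderiv_def by simp
qed

lemma grad_gtil:
  "mu > 0 \<Longrightarrow> grad (\<lambda>u. gtil M y xb tau l u mu) w
    = (\<Sum>i\<in>{1..M l}. (- (1/2) * fsm_slope (y l i - xb l i \<bullet> w) mu - (tau - 1/2)) *\<^sub>R xb l i)"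
  by (rule grad_eqI[OF GDERIV_gtil])

lemma grad_sum_gtil:
  assumes "mu > 0"
  shows "grad (\<lambda>u. \<Sum>l\<in>{1..L}. gtil M y xb tau l u mu) w
    = (\<Sum>(l, i)\<in>Sigma {1..L} (\<lambda>l. {1..M l}).
         (- (1/2) * fsm_slope (y l i - xb l i \<bullet> w) mu - (tau - 1/2)) *\<^sub>R xb l i)"
proof -
  have "grad (\<lambda>u. \<Sum>l\<in>{1..L}. gtil M y xb tau l u mu) w
    = (\<Sum>l\<in>{1..L}. \<Sum>i\<in>{1..M l}.
         (- (1/2) * fsm_slope (y l i - xb l i \<bullet> w) mu - (tau - 1/2)) *\<^sub>R xb l i)"
    by (intro grad_eqI GDERIV_sum GDERIV_gtil assms)
  also have "\<dots> = (\<Sum>(l, i)\<in>Sigma {1..L} (\<lambda>l. {1..M l}).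
         (- (1/2) * fsm_slope (y l i - xb l i \<bullet> w) mu - (tau - 1/2)) *\<^sub>R xb l i)"
    by (rule sum.Sigma) auto
  finally show ?thesis .
qed

lemma grad_sum_gtil_diff:
  assumes "mu > 0" "mu' > 0"
  shows "grad (\<lambda>u. \<Sum>l\<in>{1..L}. gtil M y xb tau l u mu') w'
      - grad (\<lambda>u. \<Sum>l\<in>{1..L}. gtil M y xb tau l u mu) w
    = (- 1/2) *\<^sub>R (\<Sum>p\<in>Sigma {1..L} (\<lambda>l. {1..M l}).
        (fsm_slope (case_prod y p - case_prod xb p \<bullet> w') mu'
          - fsm_slope (case_prod y p - case_prod xb p \<bullet> w) mu) *\<^sub>R case_prod xb p)"
  unfolding grad_sum_gtil[OF assms(1)] grad_sum_gtil[OF assms(2)]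
  by (simp add: scaleR_sum_right case_prod_beta' algebra_simps flip: sum_subtractf)

lemma nonneg_quadratic_imp_linear_coeff_zero:
  fixes a b :: real
  assumes nonneg: "\<And>t. 0 \<le> a * t + b * t\<^sup>2"
  shows "a = 0"
proof -
  define t where "t = - a / (\<bar>b\<bar> + 1)"
  have pos: "\<bar>b\<bar> + 1 > 0"
    using abs_ge_zero[of b] by linarith
  have t: "t * (\<bar>b\<bar> + 1) = - a"
    using pos by (simp add: t_def)
  have "(a * t + b * t\<^sup>2) * (\<bar>b\<bar> + 1)\<^sup>2
      = a * (t * (\<bar>b\<bar> + 1)) * (\<bar>b\<bar> + 1) + b * (t * (\<bar>b\<bar> + 1))\<^sup>2"
    by (simp add: power2_eq_square algebra_simps)
  also have "\<dots> = a\<^sup>2 * (b - \<bar>b\<bar>) - a\<^sup>2"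
    unfolding t by (simp add: power2_eq_square algebra_simps)
  finally have "(a * t + b * t\<^sup>2) * (\<bar>b\<bar> + 1)\<^sup>2 = a\<^sup>2 * (b - \<bar>b\<bar>) - a\<^sup>2" .
  moreover have "0 \<le> (a * t + b * t\<^sup>2) * (\<bar>b\<bar> + 1)\<^sup>2"
    using nonneg by simp
  moreover have "a\<^sup>2 * (b - \<bar>b\<bar>) \<le> 0"
    by (intro mult_nonneg_nonpos) auto
  ultimately have "a\<^sup>2 \<le> 0"
    by linarith
  then show ?thesis
    by simp
qed

lemma quadratic_form_attains_max_on_sphere:
  fixes X :: "'i \<Rightarrow> 'a::euclidean_space"
  obtains v where "norm v = 1"
    and "\<And>z. (\<Sum>p\<in>I. (X p \<bullet> z)\<^sup>2) \<le> (\<Sum>p\<in>I. (X p \<bullet> v)\<^sup>2) * (norm z)\<^sup>2"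
proof -
  define q where "q z = (\<Sum>p\<in>I. (X p \<bullet> z)\<^sup>2)" for z
  obtain b :: 'a where "b \<in> Basis"
    using nonempty_Basis by blast
  then have "sphere (0::'a) 1 \<noteq> {}"
    by (auto intro!: exI[of _ b])
  moreover have "continuous_on (sphere 0 1) q"
    unfolding q_def by (intro continuous_intros)
  ultimately obtain v where v: "v \<in> sphere 0 1" and v_max: "\<And>z. z \<in> sphere 0 1 \<Longrightarrow> q z \<le> q v"
    using continuous_attains_sup[OF compact_sphere] by blast
  have "q z \<le> q v * (norm z)\<^sup>2" for z
  proof (cases "z = 0")
    case True
    then show ?thesis by (simp add: q_def)
  next
    case False
    have "q ((1 / norm z) *\<^sub>R z) \<le> q v"
      using False by (intro v_max) auto
    moreover have "q ((1 / norm z) *\<^sub>R z) = q z / (norm z)\<^sup>2"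
      unfolding q_def by (simp add: sum_divide_distrib power_divide)
    ultimately show ?thesis
      using False by (simp add: divide_le_eq)
  qed
  then show ?thesis
    using that v unfolding q_def by simp
qed

lemma quadratic_form_maximizer_is_eigenvector:
  fixes X :: "'i \<Rightarrow> 'a::euclidean_space"
  assumes quad: "\<And>z. (\<Sum>p\<in>I. (X p \<bullet> z)\<^sup>2) \<le> m * (norm z)\<^sup>2"
    and "norm v = 1" and m: "m = (\<Sum>p\<in>I. (X p \<bullet> v)\<^sup>2)"
  shows "(\<Sum>p\<in>I. (X p \<bullet> v) *\<^sub>R X p) = m *\<^sub>R v"
proof -
  define q where "q z = (\<Sum>p\<in>I. (X p \<bullet> z)\<^sup>2)" for z
  define f where "f z = (\<Sum>p\<in>I. (X p \<bullet> z) *\<^sub>R X p)" for z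
  have v_v: "v \<bullet> v = 1"
    using \<open>norm v = 1\<close> by (simp add: power2_norm_eq_inner[symmetric])
  \<comment> \<open>m times the squared norm minus q is a nonnegative quadratic form vanishing at v, so along
    every line through v its first-order term vanishes.\<close>
  have "2 * (u \<bullet> (m *\<^sub>R v - f v)) = 0" for u
  proof (rule nonneg_quadratic_imp_linear_coeff_zero)
    fix t :: real
    have "(norm (v + t *\<^sub>R u))\<^sup>2 = 1 + 2 * t * (u \<bullet> v) + t\<^sup>2 * (norm u)\<^sup>2"
      unfolding power2_norm_eq_inner
      by (simp add: v_v inner_add_left inner_add_right inner_commute algebra_simps power2_eq_square)
    moreover have "q (v + t *\<^sub>R u) = m + 2 * t * (u \<bullet> f v) + t\<^sup>2 * q u"
      unfolding q_def f_def m
      by (simp add: inner_add_right inner_sum_right power2_sum sum.distrib sum_distrib_left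
          algebra_simps power_mult_distrib inner_commute)
    ultimately show "0 \<le> 2 * (u \<bullet> (m *\<^sub>R v - f v)) * t + (m * (norm u)\<^sup>2 - q u) * t\<^sup>2"
      using quad[of "v + t *\<^sub>R u"] by (simp add: q_def inner_diff_right algebra_simps)
  qed
  then have "(m *\<^sub>R v - f v) \<bullet> (m *\<^sub>R v - f v) = 0"
    by simp
  then show ?thesis
    unfolding f_def by simp
qed

lemma self_adjoint_eigenvalues_finite:
  fixes f :: "'a::euclidean_space \<Rightarrow> 'a"
  assumes self_adjoint: "\<And>z z'. f z \<bullet> z' = z \<bullet> f z'"
  shows "finite {lam. \<exists>z. z \<noteq> 0 \<and> f z = lam *\<^sub>R z}"
proof -
  define E where "E = {lam. \<exists>z. z \<noteq> 0 \<and> f z = lam *\<^sub>R z}"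
  have eigenvector_ex: "\<forall>lam\<in>E. \<exists>z. z \<noteq> 0 \<and> f z = lam *\<^sub>R z"
    unfolding E_def by blast
  obtain Z where Z: "\<And>lam. lam \<in> E \<Longrightarrow> Z lam \<noteq> 0 \<and> f (Z lam) = lam *\<^sub>R Z lam"
    using bchoice[OF eigenvector_ex] by blast
  have inj: "inj_on Z E"
  proof (rule inj_onI)
    fix a b
    assume a: "a \<in> E" and b: "b \<in> E" and eq: "Z a = Z b"
    then have "a *\<^sub>R Z a = b *\<^sub>R Z a"
      using Z[OF a] Z[OF b] by metis
    then show "a = b"
      using Z[OF a] by simp
  qed
  have "pairwise orthogonal (Z ` E)"
  proof (rule pairwiseI, clarify)
    fix a b
    assume a: "a \<in> E" and b: "b \<in> E" and ne: "Z a \<noteq> Z b"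
    have "a * (Z a \<bullet> Z b) = b * (Z a \<bullet> Z b)"
      using self_adjoint[of "Z a" "Z b"] Z[OF a] Z[OF b] by simp
    moreover have "a \<noteq> b"
      using ne by auto
    ultimately show "orthogonal (Z a) (Z b)"
      by (simp add: orthogonal_def)
  qed
  moreover have "0 \<notin> Z ` E"
    using Z by auto
  ultimately have "independent (Z ` E)"
    by (rule pairwise_orthogonal_independent)
  then have "finite (Z ` E)"
    using independent_bound by blast
  then show ?thesis
    using finite_imageD[OF _ inj] unfolding E_def by blast
qed

lemma gram_eigenvalue_iff:
  fixes s :: "'a::euclidean_space list"
  assumes "lam \<noteq> 0"
  shows "is_eigenvalue (length s) (\<lambda>i j. s ! i \<bullet> s ! j) lam
    \<longleftrightarrow> (\<exists>z. z \<noteq> 0 \<and> (\<Sum>j<length s. (s ! j \<bullet> z) *\<^sub>R s ! j) = lam *\<^sub>R z)"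
proof
  assume "is_eigenvalue (length s) (\<lambda>i j. s ! i \<bullet> s ! j) lam"
  then obtain u where u: "\<exists>i<length s. u i \<noteq> 0"
    and eig: "\<And>i. i < length s \<Longrightarrow> (\<Sum>j<length s. (s ! i \<bullet> s ! j) * u j) = lam * u i"
    unfolding is_eigenvalue_def by blast
  define z where "z = (\<Sum>j<length s. u j *\<^sub>R s ! j)"
  have s_z: "s ! i \<bullet> z = lam * u i" if "i < length s" for i
    using eig[OF that] unfolding z_def by (simp add: inner_sum_right mult.commute)
  have "(\<Sum>j<length s. (s ! j \<bullet> z) *\<^sub>R s ! j) = lam *\<^sub>R z"
    unfolding z_def scaleR_sum_right by (intro sum.cong) (auto simp: s_z[unfolded z_def])
  moreover have "z \<noteq> 0"
    using u s_z assms by force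
  ultimately show "\<exists>z. z \<noteq> 0 \<and> (\<Sum>j<length s. (s ! j \<bullet> z) *\<^sub>R s ! j) = lam *\<^sub>R z"
    by blast
next
  assume "\<exists>z. z \<noteq> 0 \<and> (\<Sum>j<length s. (s ! j \<bullet> z) *\<^sub>R s ! j) = lam *\<^sub>R z"
  then obtain z where "z \<noteq> 0" and eig: "(\<Sum>j<length s. (s ! j \<bullet> z) *\<^sub>R s ! j) = lam *\<^sub>R z"
    by blast
  have "(\<Sum>j<length s. (s ! i \<bullet> s ! j) * (s ! j \<bullet> z)) = lam * (s ! i \<bullet> z)" for i
    using arg_cong[OF eig, of "inner (s ! i)"] by (simp add: inner_sum_right mult.commute)
  moreover have "\<exists>i<length s. s ! i \<bullet> z \<noteq> 0"
  proof (rule ccontr)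
    assume "\<not> ?thesis"
    then have "lam *\<^sub>R z = 0"
      by (simp flip: eig)
    then show False
      using \<open>z \<noteq> 0\<close> assms by simp
  qed
  ultimately show "is_eigenvalue (length s) (\<lambda>i j. s ! i \<bullet> s ! j) lam"
    unfolding is_eigenvalue_def by (intro exI[of _ "\<lambda>j. s ! j \<bullet> z"]) simp
qed

lemma finite_gram_eigenvalues:
  fixes s :: "'a::euclidean_space list"
  shows "finite {lam. is_eigenvalue (length s) (\<lambda>i j. s ! i \<bullet> s ! j) lam}"
proof -
  have "finite {lam. \<exists>z. z \<noteq> 0 \<and> (\<Sum>j<length s. (s ! j \<bullet> z) *\<^sub>R s ! j) = lam *\<^sub>R z}"
    by (rule self_adjoint_eigenvalues_finite)
      (simp add: inner_sum_left inner_sum_right inner_commute mult.commute)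
  moreover have "{lam. is_eigenvalue (length s) (\<lambda>i j. s ! i \<bullet> s ! j) lam}
      \<subseteq> insert 0 {lam. \<exists>z. z \<noteq> 0 \<and> (\<Sum>j<length s. (s ! j \<bullet> z) *\<^sub>R s ! j) = lam *\<^sub>R z}"
    by (auto simp: gram_eigenvalue_iff)
  ultimately show ?thesis
    by (meson finite_insert finite_subset)
qed

lemma gram_quadratic_form_le_lambda_max:
  fixes s :: "'a::euclidean_space list"
  assumes "s \<noteq> []"
  shows "(\<Sum>j<length s. (s ! j \<bullet> z)\<^sup>2) \<le> lambda_max (length s) (\<lambda>i j. s ! i \<bullet> s ! j) * (norm z)\<^sup>2"
proof -
  obtain v where "norm v = 1"
    and quad: "\<And>z. (\<Sum>j<length s. (s ! j \<bullet> z)\<^sup>2) \<le> (\<Sum>j<length s. (s ! j \<bullet> v)\<^sup>2) * (norm z)\<^sup>2"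
    using quadratic_form_attains_max_on_sphere[where X = "nth s" and I = "{..<length s}"] by blast
  define m where "m = (\<Sum>j<length s. (s ! j \<bullet> v)\<^sup>2)"
  note quad = quad[folded m_def]
  have eig: "(\<Sum>j<length s. (s ! j \<bullet> v) *\<^sub>R s ! j) = m *\<^sub>R v"
    by (rule quadratic_form_maximizer_is_eigenvector[OF quad \<open>norm v = 1\<close> m_def])
  have "is_eigenvalue (length s) (\<lambda>i j. s ! i \<bullet> s ! j) m"
  proof (cases "m = 0")
    case True
    have "s ! j \<bullet> s ! j = 0" if "j < length s" for j
      using quad[of "s ! j"] True that sum_nonneg_eq_0_iff[of "{..<length s}" "\<lambda>i. (s ! i \<bullet> s ! j)\<^sup>2"]
      by (simp add: antisym sum_nonneg)
    then show ?thesis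
      using True assms unfolding is_eigenvalue_def
      by (intro exI[of _ "\<lambda>j. if j = 0 then 1 else 0"]) auto
  next
    case False
    then show ?thesis
      using \<open>norm v = 1\<close> eig by (auto simp: gram_eigenvalue_iff intro!: exI[of _ v])
  qed
  then have "m \<le> lambda_max (length s) (\<lambda>i j. s ! i \<bullet> s ! j)"
    unfolding lambda_max_def by (intro Max_ge finite_gram_eigenvalues) simp
  then show ?thesis
    using quad[of z] by (meson mult_right_mono order_trans zero_le_power2)
qed

lemma quadratic_bound_nonneg:
  fixes X :: "'i \<Rightarrow> 'a::euclidean_space"
  assumes "\<And>z. (\<Sum>p\<in>I. (X p \<bullet> z)\<^sup>2) \<le> m * (norm z)\<^sup>2"
  shows "0 \<le> m"
proof -
  obtain b :: 'a where "b \<in> Basis"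
    using nonempty_Basis by blast
  have "0 \<le> (\<Sum>p\<in>I. (X p \<bullet> b)\<^sup>2)"
    by (intro sum_nonneg) simp
  also have "\<dots> \<le> m"
    using assms[of b] \<open>b \<in> Basis\<close> by simp
  finally show ?thesis .
qed

lemma norm_sum_scaleR_le_L2_set:
  fixes X :: "'i \<Rightarrow> 'a::euclidean_space"
  assumes quad: "\<And>z. (\<Sum>p\<in>I. (X p \<bullet> z)\<^sup>2) \<le> m * (norm z)\<^sup>2"
  shows "norm (\<Sum>p\<in>I. d p *\<^sub>R X p) \<le> sqrt m * L2_set d I"
proof -
  define V where "V = (\<Sum>p\<in>I. d p *\<^sub>R X p)"
  have "(norm V)\<^sup>2 = (\<Sum>p\<in>I. d p * (X p \<bullet> V))"
    unfolding power2_norm_eq_inner by (subst (1) V_def) (simp add: inner_sum_left)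
  also have "\<dots> \<le> (\<Sum>p\<in>I. \<bar>d p\<bar> * \<bar>X p \<bullet> V\<bar>)"
    by (intro sum_mono) (simp flip: abs_mult)
  also have "\<dots> \<le> L2_set d I * L2_set (\<lambda>p. X p \<bullet> V) I"
    by (rule L2_set_mult_ineq)
  also have "L2_set (\<lambda>p. X p \<bullet> V) I \<le> sqrt (m * (norm V)\<^sup>2)"
    unfolding L2_set_def using quad[of V] by (rule real_sqrt_le_mono)
  also have "\<dots> = sqrt m * norm V"
    by (simp add: real_sqrt_mult)
  finally have "(norm V)\<^sup>2 \<le> L2_set d I * (sqrt m * norm V)"
    by (simp add: mult_left_mono)
  then have "norm V \<le> sqrt m * L2_set d I"
    using quadratic_bound_nonneg[OF quad]
    by (cases "norm V = 0") (auto simp: power2_eq_square algebra_simps)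
  then show ?thesis
    unfolding V_def .
qed

lemma norm_sum_fsm_slope_residual_change_le:
  fixes X :: "'i \<Rightarrow> 'a::euclidean_space"
  assumes quad: "\<And>z. (\<Sum>p\<in>I. (X p \<bullet> z)\<^sup>2) \<le> \<Lambda> * (norm z)\<^sup>2" and mu: "0 < mu"
  shows "norm (\<Sum>p\<in>I. (fsm_slope (Y p - X p \<bullet> w') mu - fsm_slope (Y p - X p \<bullet> w) mu) *\<^sub>R X p)
    \<le> \<Lambda> / mu * norm (w' - w)"
proof -
  define \<delta> where "\<delta> p = fsm_slope (Y p - X p \<bullet> w') mu - fsm_slope (Y p - X p \<bullet> w) mu" for p
  have \<Lambda>: "0 \<le> \<Lambda>"
    by (rule quadratic_bound_nonneg[OF quad])
  have "(\<delta> p)\<^sup>2 \<le> (X p \<bullet> (w' - w))\<^sup>2 / mu\<^sup>2" for p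
  proof -
    have "\<bar>\<delta> p\<bar> \<le> \<bar>X p \<bullet> (w' - w)\<bar> / mu"
      using fsm_slope_lipschitz[OF mu, of "Y p - X p \<bullet> w'" "Y p - X p \<bullet> w"]
      by (simp add: \<delta>_def inner_diff_right abs_minus_commute)
    then show ?thesis
      using mu by (simp add: abs_divide flip: power_divide abs_le_square_iff)
  qed
  then have "(\<Sum>p\<in>I. (\<delta> p)\<^sup>2) \<le> (\<Sum>p\<in>I. (X p \<bullet> (w' - w))\<^sup>2) / mu\<^sup>2"
    unfolding sum_divide_distrib by (rule sum_mono)
  also have "\<dots> \<le> \<Lambda> * (norm (w' - w))\<^sup>2 / mu\<^sup>2"
    by (intro divide_right_mono quad) simp
  finally have "L2_set \<delta> I \<le> sqrt \<Lambda> * norm (w' - w) / mu"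
    unfolding L2_set_def using mu \<Lambda>
    by (intro real_le_lsqrt) (simp_all add: power_divide power_mult_distrib)
  then have "sqrt \<Lambda> * L2_set \<delta> I \<le> sqrt \<Lambda> * (sqrt \<Lambda> * norm (w' - w) / mu)"
    by (rule mult_left_mono) (simp add: \<Lambda>)
  also have "\<dots> = \<Lambda> / mu * norm (w' - w)"
    using \<Lambda> by simp
  finally show ?thesis
    using norm_sum_scaleR_le_L2_set[OF quad, of \<delta>] unfolding \<delta>_def by simp
qed

lemma norm_sum_fsm_slope_smoothing_change_le:
  fixes X :: "'i \<Rightarrow> 'a::euclidean_space"
  assumes quad: "\<And>z. (\<Sum>p\<in>I. (X p \<bullet> z)\<^sup>2) \<le> \<Lambda> * (norm z)\<^sup>2" and mu': "0 < mu'" "mu' \<le> mu"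
  shows "norm (\<Sum>p\<in>I. (fsm_slope (Y p - X p \<bullet> w) mu' - fsm_slope (Y p - X p \<bullet> w) mu) *\<^sub>R X p)
    \<le> real (card I) * sqrt \<Lambda> * ((mu - mu') / mu')"
proof -
  define \<delta> where "\<delta> p = fsm_slope (Y p - X p \<bullet> w) mu' - fsm_slope (Y p - X p \<bullet> w) mu" for p
  have "L2_set \<delta> I = L2_set (\<lambda>p. \<bar>\<delta> p\<bar>) I"
    by (simp add: L2_set_def)
  also have "\<dots> \<le> L2_set (\<lambda>_. (mu - mu') / mu') I"
    unfolding \<delta>_def by (intro L2_set_mono fsm_slope_smoothing_change mu') simp
  also have "\<dots> = sqrt (real (card I)) * ((mu - mu') / mu')"
    using mu' by (simp add: L2_set_constant)
  also have "\<dots> \<le> real (card I) * ((mu - mu') / mu')"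
    using mu' by (intro mult_right_mono real_le_lsqrt)
      (auto simp: power2_eq_square le_square simp flip: of_nat_mult)
  finally have "sqrt \<Lambda> * L2_set \<delta> I \<le> sqrt \<Lambda> * (real (card I) * ((mu - mu') / mu'))"
    by (rule mult_left_mono) (simp add: quadratic_bound_nonneg[OF quad])
  then show ?thesis
    using norm_sum_scaleR_le_L2_set[OF quad, of \<delta>] unfolding \<delta>_def by (simp add: algebra_simps)
qed

lemma norm_sum_fsm_slope_diff_le:
  fixes X :: "'i \<Rightarrow> 'a::euclidean_space"
  assumes quad: "\<And>z. (\<Sum>p\<in>I. (X p \<bullet> z)\<^sup>2) \<le> \<Lambda> * (norm z)\<^sup>2" and mu': "0 < mu'" "mu' \<le> mu"
  shows "norm (\<Sum>p\<in>I. (fsm_slope (Y p - X p \<bullet> w') mu' - fsm_slope (Y p - X p \<bullet> w) mu) *\<^sub>R X p)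
    \<le> \<Lambda> / mu * norm (w' - w) + real (card I) * sqrt \<Lambda> * ((mu - mu') / mu')"
proof -
  have "(\<Sum>p\<in>I. (fsm_slope (Y p - X p \<bullet> w') mu' - fsm_slope (Y p - X p \<bullet> w) mu) *\<^sub>R X p)
      = (\<Sum>p\<in>I. (fsm_slope (Y p - X p \<bullet> w') mu - fsm_slope (Y p - X p \<bullet> w) mu) *\<^sub>R X p)
        + (\<Sum>p\<in>I. (fsm_slope (Y p - X p \<bullet> w') mu' - fsm_slope (Y p - X p \<bullet> w') mu) *\<^sub>R X p)"
    by (simp add: algebra_simps flip: sum.distrib)
  moreover have "0 < mu"
    using mu' by linarith
  ultimately show ?thesis
    using norm_triangle_le[OF add_mono[OF norm_sum_fsm_slope_residual_change_le[OF quad]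
          norm_sum_fsm_slope_smoothing_change_le[OF quad mu']]]
    by simp
qed

lemma sum_list_concat: "sum_list (concat xss) = sum_list (map sum_list xss)"
  by (induction xss) simp_all

lemma sum_samples:
  "(\<Sum>j<length (samples L M xb). g (samples L M xb ! j))
    = (\<Sum>(l, i)\<in>Sigma {1..L} (\<lambda>l. {1..M l}). g (xb l i))"
proof -
  have "(\<Sum>j<length (samples L M xb). g (samples L M xb ! j)) = sum_list (map g (samples L M xb))"
    by (simp add: sum_list_sum_nth atLeast0LessThan)
  also have "\<dots> = (\<Sum>l\<in>{1..L}. \<Sum>i\<in>{1..M l}. g (xb l i))"
    by (simp add: samples_def map_concat sum_list_concat comp_def interv_sum_list_conv_sum_set_nat
        atLeastLessThanSuc_atLeastAtMost del: upt_Suc)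
  also have "\<dots> = (\<Sum>(l, i)\<in>Sigma {1..L} (\<lambda>l. {1..M l}). g (xb l i))"
    by (rule sum.Sigma) auto
  finally show ?thesis .
qed

lemma length_samples: "length (samples L M xb) = (\<Sum>l\<in>{1..L}. M l)"
  using sum_samples[of "\<lambda>_. 1::nat" L M xb] by (simp add: sum.Sigma[symmetric])

lemma gram_lambda_max_bound:
  assumes "n = (\<Sum>l\<in>{1..L}. M l)" and "n \<noteq> 0"
  shows "(\<Sum>p\<in>Sigma {1..L} (\<lambda>l. {1..M l}). (case_prod xb p \<bullet> z)\<^sup>2)
    \<le> lambda_max n (gram L M xb) * (norm z)\<^sup>2"
proof -
  have length: "length (samples L M xb) = n"
    using length_samples assms(1) by simp
  then have nonempty: "samples L M xb \<noteq> []"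
    using assms(2) by auto
  have gram: "gram L M xb = (\<lambda>i j. samples L M xb ! i \<bullet> samples L M xb ! j)"
    by (simp add: gram_def fun_eq_iff)
  show ?thesis
    using gram_quadratic_form_le_lambda_max[OF nonempty, of z]
    unfolding sum_samples[of "\<lambda>x. (x \<bullet> z)\<^sup>2"] unfolding length gram
    by (simp add: case_prod_beta')
qed

lemma smoothing_schedule_decreasing:
  assumes "0 < beta" "0 < d" and mu_def: "\<And>j. j \<ge> 1 \<Longrightarrow> mu j = beta / real j powr d"
  shows "0 < mu (k + 2)" and "mu (k + 2) \<le> mu (k + 1)"
proof -
  have "real (k + 1) powr d \<le> real (k + 2) powr d"
    using assms by (intro powr_mono2) auto
  then show "0 < mu (k + 2)" and "mu (k + 2) \<le> mu (k + 1)"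
    using assms mu_def[of "k + 1"] mu_def[of "k + 2"] by (auto intro: divide_left_mono)
qed

theorem lemma4:
  fixes L :: nat and M :: "nat \<Rightarrow> nat"
    and y :: "nat \<Rightarrow> nat \<Rightarrow> real" and xb :: "nat \<Rightarrow> nat \<Rightarrow> real ^ 'd"
    and ic :: 'd and tau lam gam c beta d :: real
    and g :: "real \<Rightarrow> real" and w :: "nat \<Rightarrow> real ^ 'd"
    and mu sigma :: "nat \<Rightarrow> real" and n :: nat and k :: nat
  assumes intercept: "\<And>l i. l \<in> {1..L} \<Longrightarrow> i \<in> {1..M l} \<Longrightarrow> xb l i $ ic = 1"
    and n_def: "n = (\<Sum>l\<in>{1..L}. M l)"
    and tau: "0 < tau" "tau < 1"
    and lam: "lam > 0"
    and pen: "(gam \<ge> 1 \<and> g = mcp lam gam) \<or> (gam \<ge> 2 \<and> g = scad lam gam)"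
    and params: "c > 0" "beta > 0" "0 < d" "d < 1"
    and sigma_def: "\<And>j. j \<ge> 1 \<Longrightarrow> sigma j = c * real j powr d"
    and mu_def: "\<And>j. j \<ge> 1 \<Longrightarrow> mu j = beta / real j powr d"
    and step: "\<And>j v. (\<Sum>l\<in>{1..L}. grad (\<lambda>u. gtil M y xb tau l u (mu (j+1))) (w j) \<bullet> (w (j+1) - w j))
                      + real n * penalty g ic (w (j+1))
                      + sigma (j+1) / 2 * (norm (w (j+1) - w j))\<^sup>2
                 \<le> (\<Sum>l\<in>{1..L}. grad (\<lambda>u. gtil M y xb tau l u (mu (j+1))) (w j) \<bullet> (v - w j))
                      + real n * penalty g ic v
                      + sigma (j+1) / 2 * (norm (v - w j))\<^sup>2"
  shows "norm (grad (\<lambda>u. \<Sum>l\<in>{1..L}. gtil M y xb tau l u (mu (k+2))) (w (k+1))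
               - grad (\<lambda>u. \<Sum>l\<in>{1..L}. gtil M y xb tau l u (mu (k+1))) (w k))
         \<le> lambda_max n (gram L M xb) / (2 * mu (k+1)) * norm (w (k+1) - w k)
           + real n * sqrt (lambda_max n (gram L M xb)) / 2 * ((mu (k+1) - mu (k+2)) / mu (k+2))"

proof -
  let ?I = "Sigma {1..L} (\<lambda>l. {1..M l})"
  let ?\<Lambda> = "lambda_max n (gram L M xb)"
  have mu2: "0 < mu (k + 2)" and mu21: "mu (k + 2) \<le> mu (k + 1)"
    using smoothing_schedule_decreasing[OF params(2,3) mu_def] by blast+
  then have mu1: "0 < mu (k + 1)"
    by linarith
  have card_I: "card ?I = n"
    using n_def by simp
  note grad_diff = grad_sum_gtil_diff[OF mu1 mu2]
  show ?thesis
  proof (cases "n = 0")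
    case True
    \<comment> \<open>Here \<Lambda> = Max {} is unspecified, so the bound must come from w (k + 1) = w k.\<close>
    then have "?I = {}" and no_samples: "\<And>l. l \<in> {1..L} \<Longrightarrow> M l = 0"
      using card_I n_def by auto
    have "(\<Sum>l\<in>{1..L}. grad (\<lambda>u. gtil M y xb tau l u (mu (k + 1))) (w k) \<bullet> v) = 0" for v
      unfolding grad_gtil[OF mu1] by (intro sum.neutral ballI) (simp add: no_samples)
    then have "sigma (k + 1) / 2 * (norm (w (k + 1) - w k))\<^sup>2 \<le> 0"
      using step[of k "w k"] True by simp
    then have "w (k + 1) = w k"
      using sigma_def[of "k + 1"] params by (simp add: mult_le_0_iff)
    then show ?thesis
      unfolding grad_diff using \<open>?I = {}\<close> True by simp
  next
    case False
    from norm_sum_fsm_slope_diff_le[OF gram_lambda_max_bound[OF n_def False] mu2 mu21,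
        where Y = "case_prod y" and w' = "w (k + 1)" and w = "w k"]
    have "norm (grad (\<lambda>u. \<Sum>l\<in>{1..L}. gtil M y xb tau l u (mu (k+2))) (w (k+1))
        - grad (\<lambda>u. \<Sum>l\<in>{1..L}. gtil M y xb tau l u (mu (k+1))) (w k))
      \<le> (?\<Lambda> / mu (k + 1) * norm (w (k + 1) - w k)
          + real n * sqrt ?\<Lambda> * ((mu (k + 1) - mu (k + 2)) / mu (k + 2))) / 2"
      unfolding grad_diff card_I by simp
    also have "\<dots> = ?\<Lambda> / (2 * mu (k + 1)) * norm (w (k + 1) - w k)
          + real n * sqrt ?\<Lambda> / 2 * ((mu (k + 1) - mu (k + 2)) / mu (k + 2))"
      using mu1 mu2 by (simp add: field_simps)
    finally show ?thesis .
  qed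
qed

end
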